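(* Let $0<r<|\xi|_c$ and let $\lambda(r)$ be as defined in the context. Then the function $\lambda:(0,|\xi|_c)\to(0,\infty)$ satisfies $$\lambda(r)\le\frac{b\,g\,(\rho_+-\rho_-)}{4\mu_-}\quad\text{for all }r\in(0,|\xi|_c).$$ Moreover $\lim_{r\to0}\lambda(r)=0$ (for $\sigma_\pm\ge0$), and $\lim_{r\to|\xi|_c}\lambda(r)=0$ if $\sigma_->0$.
   Context: Fix $b,g>0$, $\rho_+>\rho_->0$, $\mu_\pm>0$, $\sigma_\pm\ge0$ (either both zero or both positive); $[\![\rho]\!]=\rho_+-\rho_-$. Let $\rho(x_3)=\rho_+,\mu(x_3)=\mu_+$ for $x_3\in(0,1)$ and $\rho_-,\mu_-$ for $x_3\in(-b,0)$. Let $X=\{\psi\in H^2((-b,1)):\psi(-b)=\psi'(-b)=0\}$. For $r>0,s>0,\psi\in X$: $E(\psi;r,s)=\frac12\int_{-b}^1s\mu(4r^2|\psi'|^2+|r^2\psi+\psi''|^2)dx_3+\frac12r^2(\sigma_+r^2+g\rho_+)|\psi(1)|^2+\frac12r^2(\sigma_-r^2-g[\![\rho]\!])|\psi(0)|^2$, $J(\psi;r)=\frac12\int_{-b}^1\rho(r^2|\psi|^2+|\psi'|^2)dx_3$, $\alpha(r;s)=\inf\{E(\psi;r,s):\psi\in X,J(\psi;r)=1\}$. $|\xi|_c=\sqrt{g[\![\rho]\!]/\sigma_-}$ if $\sigma_->0$, $|\xi|_c=\infty$ if $\sigma_-=0$. For $0<r<|\xi|_c$, $\lambda(r)$ denotes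 the unique $s>0$ such that $\alpha(r;s)<0$ and $s=\sqrt{-\alpha(r;s)}$ (existence and uniqueness hold). *)

theory Defs
  imports "HOL-Analysis.Analysis"
begin

text \<open>Piecewise constant coefficients: value on (0,1) is the plus value, on (-b,0) the minus value
  (the value at the single point 0 is irrelevant for the integrals).\<close>
definition pw :: "real \<Rightarrow> real \<Rightarrow> real \<Rightarrow> real" where
  "pw vp vm x = (if x > 0 then vp else vm)"

text \<open>Elements of X, i.e. psi in H^2((-b,1)) with psi(-b) = psi'(-b) = 0, represented by
  psi together with its derivative psi1 (continuous) and second weak derivative psi2 (in L^2):
  psi1(x) = int_{-b}^x psi2, psi(x) = int_{-b}^x psi1 on [-b,1].\<close>
definition inX :: "real \<Rightarrow> (real \<Rightarrow> real) \<Rightarrow> (real \<Rightarrow> real) \<Rightarrow> (real \<Rightarrow> real) \<Rightarrow> bool" where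
  "inX b \<psi> \<psi>1 \<psi>2 \<longleftrightarrow>
     set_integrable lborel {-b..1} \<psi>2 \<and>
     set_integrable lborel {-b..1} (\<lambda>x. (\<psi>2 x)\<^sup>2) \<and>
     (\<forall>x\<in>{-b..1}. \<psi>1 x = (LINT t:{-b..x}|lborel. \<psi>2 t)) \<and>
     (\<forall>x\<in>{-b..1}. \<psi> x = (LINT t:{-b..x}|lborel. \<psi>1 t))"

definition Efun :: "real \<Rightarrow> real \<Rightarrow> real \<Rightarrow> real \<Rightarrow> real \<Rightarrow> real \<Rightarrow> real \<Rightarrow> real \<Rightarrow>
    (real \<Rightarrow> real) \<Rightarrow> (real \<Rightarrow> real) \<Rightarrow> (real \<Rightarrow> real) \<Rightarrow> real \<Rightarrow> real \<Rightarrow> real" where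
  "Efun b g \<rho>p \<rho>m \<mu>p \<mu>m \<sigma>p \<sigma>m \<psi> \<psi>1 \<psi>2 r s =
     1/2 * (LINT x:{-b..1}|lborel. s * pw \<mu>p \<mu>m x *
              (4 * r\<^sup>2 * (\<psi>1 x)\<^sup>2 + (r\<^sup>2 * \<psi> x + \<psi>2 x)\<^sup>2))
   + 1/2 * r\<^sup>2 * (\<sigma>p * r\<^sup>2 + g * \<rho>p) * (\<psi> 1)\<^sup>2
   + 1/2 * r\<^sup>2 * (\<sigma>m * r\<^sup>2 - g * (\<rho>p - \<rho>m)) * (\<psi> 0)\<^sup>2"

definition Jfun :: "real \<Rightarrow> real \<Rightarrow> real \<Rightarrow> (real \<Rightarrow> real) \<Rightarrow> (real \<Rightarrow> real) \<Rightarrow> real \<Rightarrow> real" where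
  "Jfun b \<rho>p \<rho>m \<psi> \<psi>1 r =
     1/2 * (LINT x:{-b..1}|lborel. pw \<rho>p \<rho>m x * (r\<^sup>2 * (\<psi> x)\<^sup>2 + (\<psi>1 x)\<^sup>2))"

definition alpha :: "real \<Rightarrow> real \<Rightarrow> real \<Rightarrow> real \<Rightarrow> real \<Rightarrow> real \<Rightarrow> real \<Rightarrow> real \<Rightarrow> real \<Rightarrow> real \<Rightarrow> real" where
  "alpha b g \<rho>p \<rho>m \<mu>p \<mu>m \<sigma>p \<sigma>m r s =
     Inf {Efun b g \<rho>p \<rho>m \<mu>p \<mu>m \<sigma>p \<sigma>m \<psi> \<psi>1 \<psi>2 r s | \<psi> \<psi>1 \<psi>2.
            inX b \<psi> \<psi>1 \<psi>2 \<and> Jfun b \<rho>p \<rho>m \<psi> \<psi>1 r = 1}"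

definition lam :: "real \<Rightarrow> real \<Rightarrow> real \<Rightarrow> real \<Rightarrow> real \<Rightarrow> real \<Rightarrow> real \<Rightarrow> real \<Rightarrow> real \<Rightarrow> real" where
  "lam b g \<rho>p \<rho>m \<mu>p \<mu>m \<sigma>p \<sigma>m r =
     (THE s. s > 0 \<and> alpha b g \<rho>p \<rho>m \<mu>p \<mu>m \<sigma>p \<sigma>m r s < 0 \<and>
             s = sqrt (- alpha b g \<rho>p \<rho>m \<mu>p \<mu>m \<sigma>p \<sigma>m r s))"

text \<open>r < |xi|_c, where |xi|_c = sqrt(g[rho]/sigma_-) if sigma_- > 0 and infinity otherwise.\<close>
definition below_crit :: "real \<Rightarrow> real \<Rightarrow> real \<Rightarrow> real \<Rightarrow> real \<Rightarrow> bool" where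
  "below_crit g \<rho>p \<rho>m \<sigma>m r \<longleftrightarrow> \<sigma>m = 0 \<or> r < sqrt (g * (\<rho>p - \<rho>m) / \<sigma>m)"

end

theory Submission
  imports Defs
begin

text \<open>
  For fixed \<open>r\<close> the energy is affine in \<open>s\<close>: \<open>E(\<psi>;r,s) = E(\<psi>;r,0) + s D(\<psi>;r)\<close> with a
  viscous part \<open>D \<ge> 0\<close>. Hence \<open>\<alpha>(r;\<cdot>)\<close> is an infimum of nondecreasing affine functions,
  so it is monotone and concave (thus continuous), and \<open>\<lambda>(r)\<close> is the unique zero of
  \<open>s\<^sup>2 + \<alpha>(r;s)\<close>, which exists as soon as some admissible \<open>\<psi>\<close> has \<open>E(\<psi>;r,0) < 0\<close>.

  Everything is controlled by \<open>c = \<integral>\<^sub>-\<^sub>b\<^sup>0 |\<psi>'|\<^sup>2\<close>: Cauchy-Schwarz gives \<open>\<psi>(0)\<^sup>2 \<le> b c\<close>, the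
  constraint \<open>J = 1\<close> gives \<open>c \<le> 2/\<rho>\<^sub>-\<close>, and \<open>D \<ge> 2\<mu>\<^sub>- r\<^sup>2 c\<close>. With
  \<open>\<kappa> = g[\<rho>] - \<sigma>\<^sub>- r\<^sup>2 > 0\<close> this yields \<open>E(\<psi>;r,0) \<ge> -r\<^sup>2\<kappa>bc/2 \<ge> -r\<^sup>2\<kappa>b/\<rho>\<^sub>-\<close>, so
  \<open>\<lambda>(r)\<^sup>2 \<le> r\<^sup>2\<kappa>b/\<rho>\<^sub>-\<close>, and \<open>E(\<psi>;r,s) \<ge> r\<^sup>2c(4\<mu>\<^sub>-s - \<kappa>b)/2 \<ge> 0\<close> for \<open>s > \<kappa>b/(4\<mu>\<^sub>-)\<close>, so
  \<open>\<lambda>(r) \<le> \<kappa>b/(4\<mu>\<^sub>-)\<close>. The first bound vanishes at \<open>r = 0\<close> and at \<open>r = |\<xi>|\<^sub>c\<close>, where \<open>\<kappa> = 0\<close>.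
\<close>

definition inf_affine :: "'i set \<Rightarrow> ('i \<Rightarrow> real) \<Rightarrow> ('i \<Rightarrow> real) \<Rightarrow> real \<Rightarrow> real" where
  "inf_affine I A B s = Inf ((\<lambda>i. A i + s * B i) ` I)"

locale affine_family =
  fixes I :: "'i set" and A B :: "'i \<Rightarrow> real" and L :: real
  assumes nonempty: "I \<noteq> {}"
    and A_lower: "\<And>i. i \<in> I \<Longrightarrow> -L \<le> A i"
    and B_nonneg: "\<And>i. i \<in> I \<Longrightarrow> 0 \<le> B i"
begin

abbreviation \<alpha> :: "real \<Rightarrow> real" where "\<alpha> \<equiv> inf_affine I A B"

lemma bdd_below_affine: "0 \<le> s \<Longrightarrow> bdd_below ((\<lambda>i. A i + s * B i) ` I)"
  by (rule bdd_belowI2[of _ "-L"]) (smt (verit) A_lower B_nonneg mult_nonneg_nonneg)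

lemma inf_affine_le: "0 \<le> s \<Longrightarrow> i \<in> I \<Longrightarrow> \<alpha> s \<le> A i + s * B i"
  unfolding inf_affine_def by (rule cInf_lower) (auto intro: bdd_below_affine)

lemma inf_affine_greatest: "(\<And>i. i \<in> I \<Longrightarrow> c \<le> A i + s * B i) \<Longrightarrow> c \<le> \<alpha> s"
  unfolding inf_affine_def using nonempty by (auto intro!: cInf_greatest)

lemma inf_affine_lower: "0 \<le> s \<Longrightarrow> -L \<le> \<alpha> s"
  by (rule inf_affine_greatest) (smt (verit) A_lower B_nonneg mult_nonneg_nonneg)

lemma inf_affine_mono: "0 \<le> s \<Longrightarrow> s \<le> t \<Longrightarrow> \<alpha> s \<le> \<alpha> t"
proof (rule inf_affine_greatest)
  fix i assume "0 \<le> s" "s \<le> t" "i \<in> I"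
  then have "\<alpha> s \<le> A i + s * B i" by (intro inf_affine_le)
  also have "\<dots> \<le> A i + t * B i" using B_nonneg[OF \<open>i \<in> I\<close>] \<open>s \<le> t\<close> by (simp add: mult_right_mono)
  finally show "\<alpha> s \<le> A i + t * B i" .
qed

lemma inf_affine_concave: "convex_on {0<..} (\<lambda>s. - \<alpha> s)"
proof (rule convex_onI)
  fix t x y :: real assume t: "0 < t" "t < 1" and xy: "x \<in> {0<..}" "y \<in> {0<..}"
  have "(1 - t) * \<alpha> x + t * \<alpha> y \<le> \<alpha> ((1 - t) *\<^sub>R x + t *\<^sub>R y)"
  proof (rule inf_affine_greatest)
    fix i assume i: "i \<in> I"
    have "(1 - t) * \<alpha> x \<le> (1 - t) * (A i + x * B i)" "t * \<alpha> y \<le> t * (A i + y * B i)"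
      using inf_affine_le[of _ i] xy i t by (auto intro: mult_left_mono)
    then show "(1 - t) * \<alpha> x + t * \<alpha> y \<le> A i + ((1 - t) *\<^sub>R x + t *\<^sub>R y) * B i"
      by (simp add: algebra_simps)
  qed
  then show "- \<alpha> ((1 - t) *\<^sub>R x + t *\<^sub>R y) \<le> (1 - t) * - \<alpha> x + t * - \<alpha> y" by simp
qed simp

lemma continuous_on_inf_affine: "continuous_on {0<..} \<alpha>"
  using continuous_on_minus[OF convex_on_continuous[OF _ inf_affine_concave]] by simp

lemma fixed_point_iff:
  "0 < s \<Longrightarrow> (\<alpha> s < 0 \<and> s = sqrt (- \<alpha> s)) \<longleftrightarrow> s\<^sup>2 + \<alpha> s = 0"
  by (smt (verit) real_sqrt_abs real_sqrt_pow2 zero_less_power)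

lemma sq_plus_inf_affine_strict_mono: "0 < s \<Longrightarrow> s < t \<Longrightarrow> s\<^sup>2 + \<alpha> s < t\<^sup>2 + \<alpha> t"
  using inf_affine_mono[of s t] power_strict_mono[of s t 2] by simp

lemma fixed_point_sq_le: "0 < s \<Longrightarrow> s\<^sup>2 + \<alpha> s = 0 \<Longrightarrow> s\<^sup>2 \<le> L"
  using inf_affine_lower[of s] by simp

lemma fixed_point_le_ratio:
  assumes bounds: "\<And>i. i \<in> I \<Longrightarrow> \<exists>c\<ge>0. - a * c \<le> A i \<and> \<beta> * c \<le> B i"
    and \<beta>: "0 < \<beta>" and s: "0 < s" "\<alpha> s < 0"
  shows "s \<le> a / \<beta>"
proof (rule ccontr)
  assume "\<not> s \<le> a / \<beta>"
  then have "a \<le> s * \<beta>" using \<beta> by (simp add: field_simps)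
  have "0 \<le> \<alpha> s"
  proof (rule inf_affine_greatest)
    fix i assume "i \<in> I"
    then obtain c where c: "0 \<le> c" "- a * c \<le> A i" "\<beta> * c \<le> B i" using bounds by blast
    have "0 \<le> c * (s * \<beta> - a)" using c \<open>a \<le> s * \<beta>\<close> by simp
    also have "\<dots> = - a * c + s * (\<beta> * c)" by (simp add: algebra_simps)
    also have "\<dots> \<le> A i + s * B i" using c s by (intro add_mono mult_left_mono) auto
    finally show "0 \<le> A i + s * B i" .
  qed
  then show False using s by simp
qed

lemma ex1_fixed_point:
  assumes "i \<in> I" "A i < 0"
  shows "\<exists>!s. 0 < s \<and> \<alpha> s < 0 \<and> s = sqrt (- \<alpha> s)"
proof -
  have "((\<lambda>s. s\<^sup>2 + (A i + s * B i)) \<longlongrightarrow> A i) (at_right 0)"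
    by (auto intro!: tendsto_eq_intros)
  then have "\<forall>\<^sub>F s in at_right 0. s\<^sup>2 + (A i + s * B i) < 0"
    using assms(2) by (rule order_tendstoD)
  then obtain s0 where s0: "0 < s0" "s0\<^sup>2 + (A i + s0 * B i) < 0"
    unfolding eventually_at_right_field by (metis field_lbound_gt_zero)
  then have neg: "s0\<^sup>2 + \<alpha> s0 < 0" using inf_affine_le[OF _ assms(1), of s0] by simp
  define s1 where "s1 = max s0 (\<bar>L\<bar> + 1)"
  have "L < s1\<^sup>2" unfolding s1_def by (smt (verit) power2_eq_square mult_le_cancel_left1 max.cobounded2)
  moreover have "0 \<le> s1" using s0 unfolding s1_def by simp
  ultimately have pos: "0 < s1\<^sup>2 + \<alpha> s1" using inf_affine_lower[of s1] by simp
  have "continuous_on {s0..s1} (\<lambda>s. s\<^sup>2 + \<alpha> s)"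
    using s0 by (intro continuous_intros continuous_on_subset[OF continuous_on_inf_affine]) auto
  then obtain s where s: "s0 \<le> s" "s \<le> s1" "s\<^sup>2 + \<alpha> s = 0"
    using IVT'[of "\<lambda>s. s\<^sup>2 + \<alpha> s" s0 0 s1] neg pos unfolding s1_def by force
  show ?thesis
  proof (rule ex1I)
    show "0 < s \<and> \<alpha> s < 0 \<and> s = sqrt (- \<alpha> s)" using fixed_point_iff[of s] s s0 by simp
    fix t assume "0 < t \<and> \<alpha> t < 0 \<and> t = sqrt (- \<alpha> t)"
    then show "t = s" using fixed_point_iff[of t] s s0 sq_plus_inf_affine_strict_mono
      by (smt (verit))
  qed
qed

end

lemma continuous_on_indefinite_set_integral:
  fixes f F :: "real \<Rightarrow> real"
  assumes f: "set_integrable lborel {a..c} f"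
    and F: "\<forall>x\<in>{a..c}. F x = (LINT t:{a..x}|lborel. f t)"
  shows "continuous_on {a..c} F"
proof -
  have eq: "F x = integral {a..x} f" if "x \<in> {a..c}" for x
  proof -
    have "set_integrable lborel {a..x} f" by (rule set_integrable_subset[OF f]) (use that in auto)
    then show ?thesis using F that set_borel_integral_eq_integral(2) by metis
  qed
  have "continuous_on {a..c} (\<lambda>x. integral {a..x} f)"
    by (rule indefinite_integral_continuous_1[OF set_borel_integral_eq_integral(1)[OF f]])
  then show ?thesis by (subst continuous_on_cong[OF refl eq]) auto
qed

lemma inX_continuous:
  assumes "inX b \<psi> \<psi>1 \<psi>2"
  shows "continuous_on {-b..1} \<psi>1" "continuous_on {-b..1} \<psi>"
proof -
  show c1: "continuous_on {-b..1} \<psi>1"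
    using assms unfolding inX_def by (intro continuous_on_indefinite_set_integral[of "-b" 1 \<psi>2]) auto
  show "continuous_on {-b..1} \<psi>"
    using assms borel_integrable_atLeastAtMost'[OF c1] unfolding inX_def
    by (intro continuous_on_indefinite_set_integral[of "-b" 1 \<psi>1]) auto
qed

lemma set_integral_square_nonneg:
  fixes f :: "real \<Rightarrow> real" shows "0 \<le> (LINT x:S|lborel. (f x)\<^sup>2)"
  unfolding set_lebesgue_integral_def
  by (rule Bochner_Integration.integral_nonneg_AE) (auto split: split_indicator)

lemma square_set_integral_le:
  fixes h :: "real \<Rightarrow> real"
  assumes h: "continuous_on {a..c} h" and ac: "a < c"
  shows "(LINT x:{a..c}|lborel. h x)\<^sup>2 \<le> (c - a) * (LINT x:{a..c}|lborel. (h x)\<^sup>2)"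
proof -
  define I where "I = (LINT x:{a..c}|lborel. h x)"
  define t where "t = I / (c - a)"
  have i1: "set_integrable lborel {a..c} (\<lambda>x. 2 * t * h x)"
    by (rule borel_integrable_atLeastAtMost') (intro continuous_intros h)
  have i2: "set_integrable lborel {a..c} (\<lambda>x. t\<^sup>2)"
    by (rule borel_integrable_atLeastAtMost') (intro continuous_intros)
  have "t * (c - a) = I" using ac by (simp add: t_def)
  then have "I\<^sup>2 / (c - a) = 2 * t * I - t\<^sup>2 * (c - a)"
    by (simp add: t_def power2_eq_square mult.assoc)
  also have "\<dots> = (LINT x:{a..c}|lborel. 2 * t * h x - t\<^sup>2)"
    using ac by (simp add: set_integral_diff[OF i1 i2] I_def) (subst set_integral_const, auto)
  \<comment> \<open>integrate \<open>2 t h - t\<^sup>2 \<le> h\<^sup>2\<close>, where \<open>t\<close> is the mean value of \<open>h\<close>\<close>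
  also have "\<dots> \<le> (LINT x:{a..c}|lborel. (h x)\<^sup>2)"
  proof (rule set_integral_mono)
    show "set_integrable lborel {a..c} (\<lambda>x. 2 * t * h x - t\<^sup>2)"
      using i1 i2 by (rule set_integral_diff)
    show "set_integrable lborel {a..c} (\<lambda>x. (h x)\<^sup>2)"
      by (rule borel_integrable_atLeastAtMost') (intro continuous_intros h)
    show "2 * t * h x - t\<^sup>2 \<le> (h x)\<^sup>2" for x
      using sum_squares_ge_zero[of "h x - t" 0] by (simp add: power2_eq_square algebra_simps)
  qed
  finally show ?thesis using ac unfolding I_def by (simp add: field_simps)
qed

lemma inX_sq_at_0_le:
  assumes X: "inX b \<psi> \<psi>1 \<psi>2" and b: "0 < b"
  shows "(\<psi> 0)\<^sup>2 \<le> b * (LINT x:{-b..0}|lborel. (\<psi>1 x)\<^sup>2)"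
proof -
  have "\<psi> 0 = (LINT t:{-b..0}|lborel. \<psi>1 t)" using X b unfolding inX_def by auto
  moreover have "continuous_on {-b..0} \<psi>1"
    by (rule continuous_on_subset[OF inX_continuous(1)[OF X]]) auto
  ultimately show ?thesis using square_set_integral_le[of "-b" 0 \<psi>1] b by simp
qed

lemma pw_measurable [measurable]: "pw vp vm \<in> borel_measurable lborel"
  unfolding pw_def by measurable

lemma set_integrable_pw_mult:
  assumes q: "set_integrable lborel S q"
  shows "set_integrable lborel S (\<lambda>x. pw vp vm x * q x)"
proof (rule set_integrable_bound)
  show "set_integrable lborel S (\<lambda>x. (\<bar>vp\<bar> + \<bar>vm\<bar>) * q x)" using q by simp
  have "(\<lambda>x. indicator S x *\<^sub>R q x) \<in> borel_measurable lborel"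
    using q unfolding set_integrable_def by (rule borel_measurable_integrable)
  then have "(\<lambda>x. pw vp vm x * (indicator S x *\<^sub>R q x)) \<in> borel_measurable lborel" by measurable
  then show "set_borel_measurable lborel S (\<lambda>x. pw vp vm x * q x)"
    unfolding set_borel_measurable_def by (simp add: algebra_simps)
  show "AE x in lborel. x \<in> S \<longrightarrow> norm (pw vp vm x * q x) \<le> norm ((\<bar>vp\<bar> + \<bar>vm\<bar>) * q x)"
    by (auto simp: pw_def abs_mult intro!: mult_right_mono)
qed

lemma pw_set_integral_lower:
  assumes q: "set_integrable lborel T q" and h: "set_integrable lborel S h"
    and S: "S \<subseteq> T" "S \<subseteq> {..0}"
    and q_nonneg: "\<And>x. x \<in> T \<Longrightarrow> 0 \<le> q x" and hq: "\<And>x. x \<in> S \<Longrightarrow> h x \<le> q x"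
    and vp: "0 \<le> vp" and vm: "0 \<le> vm"
  shows "vm * (LINT x:S|lborel. h x) \<le> (LINT x:T|lborel. pw vp vm x * q x)"
proof -
  have "vm * (LINT x:S|lborel. h x) = (LINT x:S|lborel. vm * h x)" by simp
  also have "\<dots> = integral\<^sup>L lborel (\<lambda>x. indicator S x *\<^sub>R (vm * h x))"
    unfolding set_lebesgue_integral_def ..
  also have "\<dots> \<le> integral\<^sup>L lborel (\<lambda>x. indicator T x *\<^sub>R (pw vp vm x * q x))"
  proof (rule integral_mono)
    show "integrable lborel (\<lambda>x. indicator S x *\<^sub>R (vm * h x))"
      using set_integrable_mult_right[OF h] unfolding set_integrable_def .
    show "integrable lborel (\<lambda>x. indicator T x *\<^sub>R (pw vp vm x * q x))"
      using set_integrable_pw_mult[OF q] unfolding set_integrable_def .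
    show "indicator S x *\<^sub>R (vm * h x) \<le> indicator T x *\<^sub>R (pw vp vm x * q x)" for x
      using S q_nonneg[of x] hq[of x] vp vm
      by (auto simp: pw_def split: split_indicator intro!: mult_left_mono)
  qed
  also have "\<dots> = (LINT x:T|lborel. pw vp vm x * q x)"
    unfolding set_lebesgue_integral_def ..
  finally show ?thesis .
qed

definition dissipation ::
    "real \<Rightarrow> real \<Rightarrow> real \<Rightarrow> (real \<Rightarrow> real) \<Rightarrow> (real \<Rightarrow> real) \<Rightarrow> (real \<Rightarrow> real) \<Rightarrow> real \<Rightarrow> real" where
  "dissipation b \<mu>p \<mu>m \<psi> \<psi>1 \<psi>2 r =
     1/2 * (LINT x:{-b..1}|lborel. pw \<mu>p \<mu>m x * (4 * r\<^sup>2 * (\<psi>1 x)\<^sup>2 + (r\<^sup>2 * \<psi> x + \<psi>2 x)\<^sup>2))"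

lemma Efun_eq_Efun_0_plus_dissipation:
  "Efun b g \<rho>p \<rho>m \<mu>p \<mu>m \<sigma>p \<sigma>m \<psi> \<psi>1 \<psi>2 r s =
     Efun b g \<rho>p \<rho>m \<mu>p \<mu>m \<sigma>p \<sigma>m \<psi> \<psi>1 \<psi>2 r 0 + s * dissipation b \<mu>p \<mu>m \<psi> \<psi>1 \<psi>2 r"
proof -
  have "(LINT x:{-b..1}|lborel. s * pw \<mu>p \<mu>m x * (4 * r\<^sup>2 * (\<psi>1 x)\<^sup>2 + (r\<^sup>2 * \<psi> x + \<psi>2 x)\<^sup>2))
     = s * (LINT x:{-b..1}|lborel. pw \<mu>p \<mu>m x * (4 * r\<^sup>2 * (\<psi>1 x)\<^sup>2 + (r\<^sup>2 * \<psi> x + \<psi>2 x)\<^sup>2))"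
    by (simp add: mult.assoc)
  then show ?thesis unfolding Efun_def dissipation_def by (simp add: algebra_simps)
qed

lemma Efun_0:
  "Efun b g \<rho>p \<rho>m \<mu>p \<mu>m \<sigma>p \<sigma>m \<psi> \<psi>1 \<psi>2 r 0 =
     1/2 * r\<^sup>2 * (\<sigma>p * r\<^sup>2 + g * \<rho>p) * (\<psi> 1)\<^sup>2 - 1/2 * r\<^sup>2 * (g * (\<rho>p - \<rho>m) - \<sigma>m * r\<^sup>2) * (\<psi> 0)\<^sup>2"
  unfolding Efun_def by (simp add: algebra_simps)

lemma set_integrable_dissipation_integrand:
  assumes X: "inX b \<psi> \<psi>1 \<psi>2"
  shows "set_integrable lborel {-b..1} (\<lambda>x. 4 * r\<^sup>2 * (\<psi>1 x)\<^sup>2 + (r\<^sup>2 * \<psi> x + \<psi>2 x)\<^sup>2)"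
proof (rule set_integral_add)
  let ?S = "{-b..1::real}"
  have c1: "continuous_on ?S \<psi>1" and c0: "continuous_on ?S \<psi>" using inX_continuous[OF X] by auto
  show "set_integrable lborel ?S (\<lambda>x. 4 * r\<^sup>2 * (\<psi>1 x)\<^sup>2)"
    by (rule borel_integrable_atLeastAtMost') (intro continuous_intros c1)
  have \<psi>2: "set_integrable lborel ?S \<psi>2" "set_integrable lborel ?S (\<lambda>x. (\<psi>2 x)\<^sup>2)"
    using X unfolding inX_def by auto
  show "set_integrable lborel ?S (\<lambda>x. (r\<^sup>2 * \<psi> x + \<psi>2 x)\<^sup>2)"
  proof (rule set_integrable_bound)
    have "set_integrable lborel ?S (\<lambda>x. (\<psi> x)\<^sup>2)"
      by (rule borel_integrable_atLeastAtMost') (intro continuous_intros c0)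
    then show "set_integrable lborel ?S (\<lambda>x. 2 * r^4 * (\<psi> x)\<^sup>2 + 2 * (\<psi>2 x)\<^sup>2)"
      using \<psi>2 by (intro set_integral_add set_integrable_mult_right)
    have "(\<lambda>x. indicator ?S x *\<^sub>R \<psi> x) \<in> borel_measurable lborel"
      "(\<lambda>x. indicator ?S x *\<^sub>R \<psi>2 x) \<in> borel_measurable lborel"
      using borel_integrable_atLeastAtMost'[OF c0] \<psi>2(1) unfolding set_integrable_def
      by (auto intro: borel_measurable_integrable)
    then have "(\<lambda>x. (r\<^sup>2 * (indicator ?S x *\<^sub>R \<psi> x) + indicator ?S x *\<^sub>R \<psi>2 x)\<^sup>2) \<in> borel_measurable lborel"
      by measurable
    moreover have "(\<lambda>x. (r\<^sup>2 * (indicator ?S x *\<^sub>R \<psi> x) + indicator ?S x *\<^sub>R \<psi>2 x)\<^sup>2)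
        = (\<lambda>x. indicator ?S x *\<^sub>R (r\<^sup>2 * \<psi> x + \<psi>2 x)\<^sup>2)"
      by (auto split: split_indicator)
    ultimately show "set_borel_measurable lborel ?S (\<lambda>x. (r\<^sup>2 * \<psi> x + \<psi>2 x)\<^sup>2)"
      unfolding set_borel_measurable_def by simp
    have "(r\<^sup>2 * \<psi> x + \<psi>2 x)\<^sup>2 \<le> 2 * r^4 * (\<psi> x)\<^sup>2 + 2 * (\<psi>2 x)\<^sup>2" for x
      using sum_squares_ge_zero[of "r\<^sup>2 * \<psi> x - \<psi>2 x" 0]
      by (simp add: power2_eq_square algebra_simps power4_eq_xxxx)
    then show "AE x in lborel. x \<in> ?S \<longrightarrow>
        norm ((r\<^sup>2 * \<psi> x + \<psi>2 x)\<^sup>2) \<le> norm (2 * r^4 * (\<psi> x)\<^sup>2 + 2 * (\<psi>2 x)\<^sup>2)"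
      by (auto intro!: AE_I2 order_trans[OF _ abs_ge_self])
  qed
qed

lemma Jfun_lower:
  assumes X: "inX b \<psi> \<psi>1 \<psi>2" and b: "0 < b" and \<rho>: "0 \<le> \<rho>p" "0 \<le> \<rho>m"
  shows "\<rho>m / 2 * (LINT x:{-b..0}|lborel. (\<psi>1 x)\<^sup>2) \<le> Jfun b \<rho>p \<rho>m \<psi> \<psi>1 r"
proof -
  have c1: "continuous_on {-b..1} \<psi>1" and c0: "continuous_on {-b..1} \<psi>" using inX_continuous[OF X] by auto
  have "\<rho>m * (LINT x:{-b..0}|lborel. (\<psi>1 x)\<^sup>2) \<le>
      (LINT x:{-b..1}|lborel. pw \<rho>p \<rho>m x * (r\<^sup>2 * (\<psi> x)\<^sup>2 + (\<psi>1 x)\<^sup>2))"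
  proof (rule pw_set_integral_lower)
    show "set_integrable lborel {-b..1} (\<lambda>x. r\<^sup>2 * (\<psi> x)\<^sup>2 + (\<psi>1 x)\<^sup>2)"
      by (rule borel_integrable_atLeastAtMost') (intro continuous_intros c0 c1)
    show "set_integrable lborel {-b..0} (\<lambda>x. (\<psi>1 x)\<^sup>2)"
      by (rule borel_integrable_atLeastAtMost')
        (intro continuous_intros continuous_on_subset[OF c1], auto)
  qed (use \<rho> in auto)
  then show ?thesis unfolding Jfun_def by simp
qed

lemma dissipation_lower:
  assumes X: "inX b \<psi> \<psi>1 \<psi>2" and b: "0 < b" and \<mu>: "0 \<le> \<mu>p" "0 \<le> \<mu>m"
  shows "2 * \<mu>m * r\<^sup>2 * (LINT x:{-b..0}|lborel. (\<psi>1 x)\<^sup>2) \<le> dissipation b \<mu>p \<mu>m \<psi> \<psi>1 \<psi>2 r"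
proof -
  have c1: "continuous_on {-b..1} \<psi>1" using inX_continuous[OF X] by auto
  have "\<mu>m * (LINT x:{-b..0}|lborel. 4 * r\<^sup>2 * (\<psi>1 x)\<^sup>2) \<le>
      (LINT x:{-b..1}|lborel. pw \<mu>p \<mu>m x * (4 * r\<^sup>2 * (\<psi>1 x)\<^sup>2 + (r\<^sup>2 * \<psi> x + \<psi>2 x)\<^sup>2))"
  proof (rule pw_set_integral_lower)
    show "set_integrable lborel {-b..0} (\<lambda>x. 4 * r\<^sup>2 * (\<psi>1 x)\<^sup>2)"
      by (rule borel_integrable_atLeastAtMost')
        (intro continuous_intros continuous_on_subset[OF c1], auto)
  qed (use \<mu> set_integrable_dissipation_integrand[OF X] in auto)
  then show ?thesis unfolding dissipation_def by simp
qed

lemma inX_scale: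
  assumes "inX b \<psi> \<psi>1 \<psi>2"
  shows "inX b (\<lambda>x. c * \<psi> x) (\<lambda>x. c * \<psi>1 x) (\<lambda>x. c * \<psi>2 x)"
proof -
  have "set_integrable lborel {-b..1} (\<lambda>x. c\<^sup>2 * (\<psi>2 x)\<^sup>2)"
    using assms unfolding inX_def by (intro set_integrable_mult_right) auto
  then show ?thesis using assms unfolding inX_def by (auto simp: power_mult_distrib)
qed

lemma Jfun_scale:
  "Jfun b \<rho>p \<rho>m (\<lambda>x. c * \<psi> x) (\<lambda>x. c * \<psi>1 x) r = c\<^sup>2 * Jfun b \<rho>p \<rho>m \<psi> \<psi>1 r"
proof -
  have "(\<lambda>x. pw \<rho>p \<rho>m x * (r\<^sup>2 * (c * \<psi> x)\<^sup>2 + (c * \<psi>1 x)\<^sup>2))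
      = (\<lambda>x. c\<^sup>2 * (pw \<rho>p \<rho>m x * (r\<^sup>2 * (\<psi> x)\<^sup>2 + (\<psi>1 x)\<^sup>2)))"
    by (simp add: power_mult_distrib algebra_simps)
  then show ?thesis unfolding Jfun_def by simp
qed

lemma set_integral_Icc_FTC:
  fixes F f :: "real \<Rightarrow> real"
  assumes "\<And>t. (F has_real_derivative f t) (at t)" "continuous_on {a..x} f" "a \<le> x"
  shows "(LINT t:{a..x}|lborel. f t) = F x - F a"
  using interval_integral_FTC_finite[of a x f F] interval_integral_Icc[of a x f] assms
  by (simp add: has_real_derivative_iff_has_vector_derivative has_vector_derivative_at_within)

lemma inX_cubic:
  "inX b (\<lambda>x. (x + b)\<^sup>2 * (1 - x)) (\<lambda>x. 2 * (x + b) * (1 - x) - (x + b)\<^sup>2) (\<lambda>x. 2 - 6 * x - 4 * b)"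
  unfolding inX_def
proof (intro conjI ballI)
  show "set_integrable lborel {-b..1} (\<lambda>x. 2 - 6 * x - 4 * b)"
    "set_integrable lborel {-b..1} (\<lambda>x. (2 - 6 * x - 4 * b)\<^sup>2)"
    by (rule borel_integrable_atLeastAtMost', intro continuous_intros)+
  fix x :: real assume x: "x \<in> {-b..1}"
  have d1: "((\<lambda>x. 2 * (x + b) * (1 - x) - (x + b)\<^sup>2) has_real_derivative (2 - 6 * t - 4 * b)) (at t)"
    and d0: "((\<lambda>x. (x + b)\<^sup>2 * (1 - x)) has_real_derivative (2 * (t + b) * (1 - t) - (t + b)\<^sup>2)) (at t)"
    for t by (auto intro!: derivative_eq_intros simp: algebra_simps)
  show "2 * (x + b) * (1 - x) - (x + b)\<^sup>2 = (LINT t:{-b..x}|lborel. 2 - 6 * t - 4 * b)"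
    using set_integral_Icc_FTC[OF d1, of "-b" x] x by (simp add: continuous_intros)
  show "(x + b)\<^sup>2 * (1 - x) = (LINT t:{-b..x}|lborel. 2 * (t + b) * (1 - t) - (t + b)\<^sup>2)"
    using set_integral_Icc_FTC[OF d0, of "-b" x] x by (simp add: continuous_intros)
qed

locale rayleigh_taylor =
  fixes b g \<rho>p \<rho>m \<mu>p \<mu>m \<sigma>p \<sigma>m :: real
  assumes b: "0 < b" and g: "0 < g" and \<rho>: "0 < \<rho>m" "\<rho>m < \<rho>p" and \<mu>: "0 < \<mu>p" "0 < \<mu>m"
    and \<sigma>: "0 \<le> \<sigma>p" "0 \<le> \<sigma>m"

locale unstable_mode = rayleigh_taylor +
  fixes r :: real
  assumes r: "0 < r" and unstable: "\<sigma>m * r\<^sup>2 < g * (\<rho>p - \<rho>m)"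
begin

abbreviation \<kappa> :: real where "\<kappa> \<equiv> g * (\<rho>p - \<rho>m) - \<sigma>m * r\<^sup>2"

abbreviation growth_rate :: real where "growth_rate \<equiv> lam b g \<rho>p \<rho>m \<mu>p \<mu>m \<sigma>p \<sigma>m r"

definition admissible :: "((real \<Rightarrow> real) \<times> (real \<Rightarrow> real) \<times> (real \<Rightarrow> real)) set" where
  "admissible = {(\<psi>, \<psi>1, \<psi>2). inX b \<psi> \<psi>1 \<psi>2 \<and> Jfun b \<rho>p \<rho>m \<psi> \<psi>1 r = 1}"

definition boundary_energy :: "(real \<Rightarrow> real) \<times> (real \<Rightarrow> real) \<times> (real \<Rightarrow> real) \<Rightarrow> real" where
  "boundary_energy = (\<lambda>(\<psi>, \<psi>1, \<psi>2). Efun b g \<rho>p \<rho>m \<mu>p \<mu>m \<sigma>p \<sigma>m \<psi> \<psi>1 \<psi>2 r 0)"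

definition viscous_energy :: "(real \<Rightarrow> real) \<times> (real \<Rightarrow> real) \<times> (real \<Rightarrow> real) \<Rightarrow> real" where
  "viscous_energy = (\<lambda>(\<psi>, \<psi>1, \<psi>2). dissipation b \<mu>p \<mu>m \<psi> \<psi>1 \<psi>2 r)"

lemma alpha_eq_inf_affine:
  "alpha b g \<rho>p \<rho>m \<mu>p \<mu>m \<sigma>p \<sigma>m r s = inf_affine admissible boundary_energy viscous_energy s"
proof -
  have "{Efun b g \<rho>p \<rho>m \<mu>p \<mu>m \<sigma>p \<sigma>m \<psi> \<psi>1 \<psi>2 r s | \<psi> \<psi>1 \<psi>2. inX b \<psi> \<psi>1 \<psi>2 \<and> Jfun b \<rho>p \<rho>m \<psi> \<psi>1 r = 1}
      = (\<lambda>i. boundary_energy i + s * viscous_energy i) ` admissible"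
    by (force simp: admissible_def boundary_energy_def viscous_energy_def
        Efun_eq_Efun_0_plus_dissipation[where s = s])
  then show ?thesis unfolding alpha_def inf_affine_def by simp
qed

lemma boundary_energy_lower:
  assumes "inX b \<psi> \<psi>1 \<psi>2"
  shows "- (r\<^sup>2 * \<kappa> * b / 2) * (LINT x:{-b..0}|lborel. (\<psi>1 x)\<^sup>2) \<le> boundary_energy (\<psi>, \<psi>1, \<psi>2)"
proof -
  have "0 \<le> 1/2 * r\<^sup>2 * (\<sigma>p * r\<^sup>2 + g * \<rho>p) * (\<psi> 1)\<^sup>2" using \<sigma> g \<rho> by simp
  moreover have "r\<^sup>2 * \<kappa> * (\<psi> 0)\<^sup>2 \<le> r\<^sup>2 * \<kappa> * (b * (LINT x:{-b..0}|lborel. (\<psi>1 x)\<^sup>2))"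
    using inX_sq_at_0_le[OF assms b] unstable by (intro mult_left_mono) auto
  ultimately show ?thesis unfolding boundary_energy_def by (simp add: Efun_0)
qed

lemma left_energy_le:
  assumes "(\<psi>, \<psi>1, \<psi>2) \<in> admissible"
  shows "(LINT x:{-b..0}|lborel. (\<psi>1 x)\<^sup>2) \<le> 2 / \<rho>m"
  using Jfun_lower[of b \<psi> \<psi>1 \<psi>2 \<rho>p \<rho>m r] assms b \<rho> by (simp add: admissible_def field_simps)

lemma boundary_energy_lower_const:
  assumes "i \<in> admissible"
  shows "- (r\<^sup>2 * \<kappa> * b / \<rho>m) \<le> boundary_energy i"
proof -
  obtain \<psi> \<psi>1 \<psi>2 where i: "i = (\<psi>, \<psi>1, \<psi>2)" by (cases i)
  have "- (r\<^sup>2 * \<kappa> * b / 2) * (2 / \<rho>m) \<le> - (r\<^sup>2 * \<kappa> * b / 2) * (LINT x:{-b..0}|lborel. (\<psi>1 x)\<^sup>2)"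
    using left_energy_le[of \<psi> \<psi>1 \<psi>2] assms unstable b unfolding i
    by (intro mult_left_mono_neg) auto
  also have "\<dots> \<le> boundary_energy i"
    using boundary_energy_lower assms unfolding i admissible_def by auto
  finally show ?thesis using \<rho> by simp
qed

lemma viscous_energy_lower:
  "inX b \<psi> \<psi>1 \<psi>2 \<Longrightarrow> 2 * \<mu>m * r\<^sup>2 * (LINT x:{-b..0}|lborel. (\<psi>1 x)\<^sup>2) \<le> viscous_energy (\<psi>, \<psi>1, \<psi>2)"
  unfolding viscous_energy_def using dissipation_lower b \<mu> by auto

lemma exists_admissible_boundary_energy_neg: "\<exists>i\<in>admissible. boundary_energy i < 0"
proof -
  \<comment> \<open>\<open>\<psi>(1) = 0\<close> removes the stabilising top term, while \<open>\<psi>(0) = b\<^sup>2 \<noteq> 0\<close>\<close>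
  define \<psi> \<psi>1 \<psi>2 where "\<psi> = (\<lambda>x. (x + b)\<^sup>2 * (1 - x))"
    and "\<psi>1 = (\<lambda>x. 2 * (x + b) * (1 - x) - (x + b)\<^sup>2)" and "\<psi>2 = (\<lambda>x. 2 - 6 * x - 4 * b)"
  have X: "inX b \<psi> \<psi>1 \<psi>2" unfolding \<psi>_def \<psi>1_def \<psi>2_def by (rule inX_cubic)
  have \<psi>_values: "\<psi> 0 = b\<^sup>2" "\<psi> 1 = 0" by (simp_all add: \<psi>_def)
  have "0 < (\<psi> 0)\<^sup>2" using b by (simp add: \<psi>_values)
  then have "0 < b * (LINT x:{-b..0}|lborel. (\<psi>1 x)\<^sup>2)" using inX_sq_at_0_le[OF X b] by linarith
  then have "0 < \<rho>m / 2 * (LINT x:{-b..0}|lborel. (\<psi>1 x)\<^sup>2)" using b \<rho> by (simp add: zero_less_mult_iff)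
  also have "\<dots> \<le> Jfun b \<rho>p \<rho>m \<psi> \<psi>1 r" using Jfun_lower[OF X b] \<rho> by simp
  finally have J: "0 < Jfun b \<rho>p \<rho>m \<psi> \<psi>1 r" .
  define c where "c = 1 / sqrt (Jfun b \<rho>p \<rho>m \<psi> \<psi>1 r)"
  let ?i = "((\<lambda>x. c * \<psi> x), (\<lambda>x. c * \<psi>1 x), (\<lambda>x. c * \<psi>2 x))"
  have "c\<^sup>2 * Jfun b \<rho>p \<rho>m \<psi> \<psi>1 r = 1" using J by (simp add: c_def power_divide)
  then have "?i \<in> admissible" using inX_scale[OF X] by (simp add: admissible_def Jfun_scale)
  moreover have "boundary_energy ?i = - (r\<^sup>2 * \<kappa> * c\<^sup>2 * b ^ 4) / 2"
    unfolding boundary_energy_def Efun_0 by (simp add: \<psi>_values power_mult_distrib)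
  moreover have "0 < r\<^sup>2 * \<kappa> * c\<^sup>2 * b ^ 4" using r b J unstable by (simp add: c_def)
  ultimately show ?thesis by force
qed

sublocale affine_family admissible boundary_energy viscous_energy "r\<^sup>2 * \<kappa> * b / \<rho>m"
proof
  show "admissible \<noteq> {}" using exists_admissible_boundary_energy_neg by blast
  fix i assume i: "i \<in> admissible"
  then show "- (r\<^sup>2 * \<kappa> * b / \<rho>m) \<le> boundary_energy i" by (rule boundary_energy_lower_const)
  obtain \<psi> \<psi>1 \<psi>2 where i_eq: "i = (\<psi>, \<psi>1, \<psi>2)" by (cases i)
  have "0 \<le> 2 * \<mu>m * r\<^sup>2 * (LINT x:{-b..0}|lborel. (\<psi>1 x)\<^sup>2)"
    using \<mu> set_integral_square_nonneg by simp
  then show "0 \<le> viscous_energy i"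
    using viscous_energy_lower i unfolding i_eq admissible_def by force
qed

lemma growth_rate_fixed_point: "0 < growth_rate \<and> \<alpha> growth_rate < 0 \<and> growth_rate = sqrt (- \<alpha> growth_rate)"
proof -
  obtain i where "i \<in> admissible" "boundary_energy i < 0"
    using exists_admissible_boundary_energy_neg by blast
  from theI'[OF ex1_fixed_point[OF this]] show ?thesis
    unfolding lam_def alpha_eq_inf_affine .
qed

lemma growth_rate_sq_le: "growth_rate\<^sup>2 \<le> r\<^sup>2 * \<kappa> * b / \<rho>m"
  using growth_rate_fixed_point fixed_point_iff fixed_point_sq_le by blast

lemma growth_rate_le: "growth_rate \<le> \<kappa> * b / (4 * \<mu>m)"
proof -
  have "growth_rate \<le> (r\<^sup>2 * \<kappa> * b / 2) / (2 * \<mu>m * r\<^sup>2)"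
  proof (rule fixed_point_le_ratio)
    fix i assume "i \<in> admissible"
    then obtain \<psi> \<psi>1 \<psi>2 where i: "i = (\<psi>, \<psi>1, \<psi>2)" "inX b \<psi> \<psi>1 \<psi>2"
      unfolding admissible_def by auto
    then show "\<exists>c\<ge>0. - (r\<^sup>2 * \<kappa> * b / 2) * c \<le> boundary_energy i \<and> 2 * \<mu>m * r\<^sup>2 * c \<le> viscous_energy i"
      using boundary_energy_lower viscous_energy_lower set_integral_square_nonneg by blast
  qed (use \<mu> r growth_rate_fixed_point in auto)
  also have "\<dots> = \<kappa> * b / (4 * \<mu>m)" using r \<mu> by (simp add: field_simps)
  finally show ?thesis .
qed

lemma growth_rate_le_uniform: "growth_rate \<le> b * g * (\<rho>p - \<rho>m) / (4 * \<mu>m)"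
proof -
  have "\<kappa> * b / (4 * \<mu>m) \<le> g * (\<rho>p - \<rho>m) * b / (4 * \<mu>m)"
    using \<sigma> b \<mu> by (intro divide_right_mono mult_right_mono) auto
  then show ?thesis using growth_rate_le by (simp add: ac_simps)
qed

end

lemma below_crit_iff:
  assumes "0 < r" "0 \<le> \<sigma>m" "0 < g * (\<rho>p - \<rho>m)"
  shows "below_crit g \<rho>p \<rho>m \<sigma>m r \<longleftrightarrow> \<sigma>m * r\<^sup>2 < g * (\<rho>p - \<rho>m)"
proof (cases "\<sigma>m = 0")
  case False
  then have "r < sqrt (g * (\<rho>p - \<rho>m) / \<sigma>m) \<longleftrightarrow> r\<^sup>2 < g * (\<rho>p - \<rho>m) / \<sigma>m"
    using assms by (metis real_less_rsqrt real_sqrt_less_iff real_sqrt_pow2 real_sqrt_power abs_of_pos real_sqrt_abs)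
  then show ?thesis using False assms by (simp add: below_crit_def field_simps mult.commute)
qed (use assms in \<open>simp add: below_crit_def\<close>)

lemma tendsto_zero_if_sq_le:
  fixes f h :: "'a \<Rightarrow> real"
  assumes "(h \<longlongrightarrow> 0) F" "\<forall>\<^sub>F x in F. 0 \<le> f x \<and> (f x)\<^sup>2 \<le> h x"
  shows "(f \<longlongrightarrow> 0) F"
proof (rule tendsto_sandwich[of "\<lambda>_. 0" f F "\<lambda>x. sqrt (h x)"])
  show "\<forall>\<^sub>F x in F. 0 \<le> f x" using assms(2) by (rule eventually_mono) simp
  show "\<forall>\<^sub>F x in F. f x \<le> sqrt (h x)"
    using assms(2) by (rule eventually_mono) (metis real_sqrt_le_mono real_sqrt_unique)
  show "((\<lambda>x. sqrt (h x)) \<longlongrightarrow> 0) F" using tendsto_real_sqrt[OF assms(1)] by simp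
qed simp

context rayleigh_taylor
begin

lemma buoyancy_pos: "0 < g * (\<rho>p - \<rho>m)"
  using g \<rho> by simp

lemma growth_rate_bounds:
  assumes "0 < r" "\<sigma>m * r\<^sup>2 < g * (\<rho>p - \<rho>m)"
  shows "0 \<le> lam b g \<rho>p \<rho>m \<mu>p \<mu>m \<sigma>p \<sigma>m r"
    and "(lam b g \<rho>p \<rho>m \<mu>p \<mu>m \<sigma>p \<sigma>m r)\<^sup>2 \<le> r\<^sup>2 * (g * (\<rho>p - \<rho>m) - \<sigma>m * r\<^sup>2) * b / \<rho>m"
    and "lam b g \<rho>p \<rho>m \<mu>p \<mu>m \<sigma>p \<sigma>m r \<le> b * g * (\<rho>p - \<rho>m) / (4 * \<mu>m)"
proof -
  interpret unstable_mode b g \<rho>p \<rho>m \<mu>p \<mu>m \<sigma>p \<sigma>m r using assms by unfold_locales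
  show "0 \<le> growth_rate" using growth_rate_fixed_point by simp
  show "growth_rate\<^sup>2 \<le> r\<^sup>2 * (g * (\<rho>p - \<rho>m) - \<sigma>m * r\<^sup>2) * b / \<rho>m" by (rule growth_rate_sq_le)
  show "growth_rate \<le> b * g * (\<rho>p - \<rho>m) / (4 * \<mu>m)" by (rule growth_rate_le_uniform)
qed

lemma tendsto_growth_rate_zero:
  assumes unstable: "\<forall>\<^sub>F r in F. 0 < r \<and> \<sigma>m * r\<^sup>2 < g * (\<rho>p - \<rho>m)"
    and lim: "((\<lambda>r. r\<^sup>2 * (g * (\<rho>p - \<rho>m) - \<sigma>m * r\<^sup>2)) \<longlongrightarrow> 0) F"
  shows "(lam b g \<rho>p \<rho>m \<mu>p \<mu>m \<sigma>p \<sigma>m \<longlongrightarrow> 0) F"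
proof (rule tendsto_zero_if_sq_le)
  show "((\<lambda>r. r\<^sup>2 * (g * (\<rho>p - \<rho>m) - \<sigma>m * r\<^sup>2) * b / \<rho>m) \<longlongrightarrow> 0) F"
    using tendsto_divide[OF tendsto_mult_right[OF lim, of b] tendsto_const[of \<rho>m]] \<rho> by simp
  show "\<forall>\<^sub>F r in F. 0 \<le> lam b g \<rho>p \<rho>m \<mu>p \<mu>m \<sigma>p \<sigma>m r \<and>
      (lam b g \<rho>p \<rho>m \<mu>p \<mu>m \<sigma>p \<sigma>m r)\<^sup>2 \<le> r\<^sup>2 * (g * (\<rho>p - \<rho>m) - \<sigma>m * r\<^sup>2) * b / \<rho>m"
    using unstable by (rule eventually_mono) (auto intro: growth_rate_bounds)
qed

lemma tendsto_growth_rate_at_right_0: "(lam b g \<rho>p \<rho>m \<mu>p \<mu>m \<sigma>p \<sigma>m \<longlongrightarrow> 0) (at_right 0)"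
proof -
  have "((\<lambda>r. \<sigma>m * r\<^sup>2) \<longlongrightarrow> \<sigma>m * 0\<^sup>2) (at_right 0)" by (intro tendsto_intros)
  then have "\<forall>\<^sub>F r in at_right 0. \<sigma>m * r\<^sup>2 < g * (\<rho>p - \<rho>m)" using order_tendstoD(2) buoyancy_pos by simp
  with eventually_at_right_less have "\<forall>\<^sub>F r in at_right 0. 0 < r \<and> \<sigma>m * r\<^sup>2 < g * (\<rho>p - \<rho>m)"
    by (rule eventually_conj)
  moreover have "((\<lambda>r. r\<^sup>2 * (g * (\<rho>p - \<rho>m) - \<sigma>m * r\<^sup>2))
      \<longlongrightarrow> 0\<^sup>2 * (g * (\<rho>p - \<rho>m) - \<sigma>m * 0\<^sup>2)) (at_right 0)"
    by (intro tendsto_intros)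
  ultimately show ?thesis using tendsto_growth_rate_zero by simp
qed

lemma tendsto_growth_rate_at_left_critical:
  assumes \<sigma>m: "0 < \<sigma>m"
  shows "(lam b g \<rho>p \<rho>m \<mu>p \<mu>m \<sigma>p \<sigma>m \<longlongrightarrow> 0) (at_left (sqrt (g * (\<rho>p - \<rho>m) / \<sigma>m)))"
proof -
  define \<xi> where "\<xi> = sqrt (g * (\<rho>p - \<rho>m) / \<sigma>m)"
  have \<xi>: "0 < \<xi>" "\<sigma>m * \<xi>\<^sup>2 = g * (\<rho>p - \<rho>m)" using buoyancy_pos \<sigma>m by (simp_all add: \<xi>_def)
  have "0 < r \<and> \<sigma>m * r\<^sup>2 < g * (\<rho>p - \<rho>m)" if "0 < r" "r < \<xi>" for r
    using mult_strict_left_mono[OF power_strict_mono[of r \<xi> 2] \<sigma>m] that \<xi>(2) by simp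
  then have "\<forall>\<^sub>F r in at_left \<xi>. 0 < r \<and> \<sigma>m * r\<^sup>2 < g * (\<rho>p - \<rho>m)"
    unfolding eventually_at_left_field using \<xi>(1) by (intro exI[of _ 0]) simp
  moreover have "((\<lambda>r. r\<^sup>2 * (g * (\<rho>p - \<rho>m) - \<sigma>m * r\<^sup>2))
      \<longlongrightarrow> \<xi>\<^sup>2 * (g * (\<rho>p - \<rho>m) - \<sigma>m * \<xi>\<^sup>2)) (at_left \<xi>)"
    by (intro tendsto_intros)
  ultimately show ?thesis unfolding \<xi>_def[symmetric] using tendsto_growth_rate_zero \<xi>(2) by simp
qed

end

theorem proposition2p3:
  fixes b g \<rho>p \<rho>m \<mu>p \<mu>m \<sigma>p \<sigma>m :: real
  assumes "b > 0" "g > 0" "\<rho>p > \<rho>m" "\<rho>m > 0" "\<mu>p > 0" "\<mu>m > 0"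
    and "\<sigma>p \<ge> 0" "\<sigma>m \<ge> 0"
    and "(\<sigma>p = 0 \<and> \<sigma>m = 0) \<or> (\<sigma>p > 0 \<and> \<sigma>m > 0)"
  shows "(\<forall>r. 0 < r \<and> below_crit g \<rho>p \<rho>m \<sigma>m r \<longrightarrow>
            lam b g \<rho>p \<rho>m \<mu>p \<mu>m \<sigma>p \<sigma>m r \<le> b * g * (\<rho>p - \<rho>m) / (4 * \<mu>m))
      \<and> (lam b g \<rho>p \<rho>m \<mu>p \<mu>m \<sigma>p \<sigma>m \<longlongrightarrow> 0) (at_right 0)
      \<and> (\<sigma>m > 0 \<longrightarrow>
          (lam b g \<rho>p \<rho>m \<mu>p \<mu>m \<sigma>p \<sigma>m \<longlongrightarrow> 0) (at_left (sqrt (g * (\<rho>p - \<rho>m) / \<sigma>m))))"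
proof -
  interpret rayleigh_taylor b g \<rho>p \<rho>m \<mu>p \<mu>m \<sigma>p \<sigma>m using assms by unfold_locales auto
  have "lam b g \<rho>p \<rho>m \<mu>p \<mu>m \<sigma>p \<sigma>m r \<le> b * g * (\<rho>p - \<rho>m) / (4 * \<mu>m)"
    if "0 < r" "below_crit g \<rho>p \<rho>m \<sigma>m r" for r
  proof (rule growth_rate_bounds(3)[OF that(1)])
    show "\<sigma>m * r\<^sup>2 < g * (\<rho>p - \<rho>m)" using below_crit_iff[OF that(1) \<sigma>(2) buoyancy_pos] that(2) by simp
  qed
  then show ?thesis using tendsto_growth_rate_at_right_0 tendsto_growth_rate_at_left_critical by blast
qed

end
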